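(* Let $\Omega\subseteq\mathbb{R}^n$ be bounded and measurable, $Y$ a Hilbert space, $S:L^2(\Omega)\to Y$ linear and continuous, $z\in Y$, $u_a,u_b\in L^\infty(\Omega)$, $u_a\le u_b$, $U_{\mathrm{ad}}=\{u\in L^2(\Omega):u_a\le u\le u_b\text{ a.e.}\}$. Let $u^\dagger$ be a solution of $\min_{u\in U_{\mathrm{ad}}}\frac12\|Su-z\|_Y^2$ satisfying the Active Set Condition (see context). Let $(\varepsilon_k)_k$ be positive reals with $\gamma_{i-1}\varepsilon_i\to0$ as $i\to\infty$. Assume $S_h=S$ and let $(u_k^{\mathrm{in}})_k$ be generated by the inexact Bregman algorithm of the context. Then $\min_{i=1,\dots,k}\|u_i^{\mathrm{in}}-u^\dagger\|\to0$ as $k\to\infty$.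
   Context: $\|\cdot\|$: $L^2(\Omega)$ norm; $P_{U_{\mathrm{ad}}}$: $L^2$-projection onto $U_{\mathrm{ad}}$; $\chi_I$: characteristic function; $|\cdot|$: Lebesgue measure. Active Set Condition, with $p^\dagger:=S^\ast(z-Su^\dagger)$: there exist $I\subseteq\Omega$, $w\in Y$, constants $\kappa,c>0$ with (1) $I\supseteq\{p^\dagger=0\}$ and $\chi_Iu^\dagger=\chi_IP_{U_{\mathrm{ad}}}(S^\ast w)$; (2) with $A:=\Omega\setminus I$, $|\{x\in A:0<|p^\dagger(x)|<\varepsilon\}|\le c\varepsilon^\kappa$ for all $\varepsilon>0$; (3) $S^\ast w\in L^\infty(\Omega)$. $(\alpha_k)_k$ bounded sequence of positive reals, $\gamma_k:=\sum_{j=1}^k\alpha_j^{-1}$ ($\gamma_0=0$). $\mathcal B(\alpha,\lambda,u):=(1+\frac1\alpha)\|u-P_{U_{\mathrm{ad}}}(\frac1\alpha S_h^\ast(z-S_hu)+\lambda)\|$ (here $S_h=S$). Inexact Bregman algorithm: $u_0^{\mathrm{in}}=P_{U_{\mathrm{ad}}}(0)$, $\lambda_0^{\mathrm{in}}=0$; for $k\ge1$ find $u_k^{\mathrm{in}}\in U_{\mathrm{ad}}$ with $\mathcal B(\alpha_k,\lambda_{k-1}^{\mathrm{in}},u_k^{\mathrm{in}})\le\varepsilon_k$, then set $\lambda_k^{\mathrm{in}}=\sum_{i=1}^k\frac1{\alpha_i}S_h^\ast(z-S_hu_i^{\mathrm{in}})$. *)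

theory Defs
  imports "HOL-Analysis.Analysis"
begin

text \<open>L^2(Omega) modelled by square-integrable measurable real functions on the
  measure space lebesgue_on Omega (functions are considered up to a.e. equality
  only through the semi-norm).\<close>

definition L2 :: "'a measure \<Rightarrow> ('a \<Rightarrow> real) set" where
  "L2 M = {f. f \<in> borel_measurable M \<and> integrable M (\<lambda>x. (f x)\<^sup>2)}"

definition L2norm :: "'a measure \<Rightarrow> ('a \<Rightarrow> real) \<Rightarrow> real" where
  "L2norm M f = sqrt (integral\<^sup>L M (\<lambda>x. (f x)\<^sup>2))"

definition Linfty :: "'a measure \<Rightarrow> ('a \<Rightarrow> real) set" where
  "Linfty M = {f. f \<in> borel_measurable M \<and> (\<exists>C. AE x in M. \<bar>f x\<bar> \<le> C)}"

definition Uad :: "'a measure \<Rightarrow> ('a \<Rightarrow> real) \<Rightarrow> ('a \<Rightarrow> real) \<Rightarrow> ('a \<Rightarrow> real) set" where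
  "Uad M ua ub = {u. u \<in> L2 M \<and> (AE x in M. ua x \<le> u x \<and> u x \<le> ub x)}"

definition projUad :: "('a \<Rightarrow> real) \<Rightarrow> ('a \<Rightarrow> real) \<Rightarrow> ('a \<Rightarrow> real) \<Rightarrow> ('a \<Rightarrow> real)" where
  "projUad ua ub v = (\<lambda>x. max (ua x) (min (ub x) (v x)))"

definition is_adjoint :: "'a measure \<Rightarrow> (('a \<Rightarrow> real) \<Rightarrow> 'y::real_inner) \<Rightarrow> ('y \<Rightarrow> ('a \<Rightarrow> real)) \<Rightarrow> bool" where
  "is_adjoint M S Sstar \<longleftrightarrow>
     (\<forall>w. Sstar w \<in> L2 M \<and> (\<forall>u\<in>L2 M. inner (S u) w = integral\<^sup>L M (\<lambda>x. u x * Sstar w x)))"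

definition bounded_linear_L2 :: "'a measure \<Rightarrow> (('a \<Rightarrow> real) \<Rightarrow> 'y::real_normed_vector) \<Rightarrow> bool" where
  "bounded_linear_L2 M S \<longleftrightarrow>
     (\<forall>u\<in>L2 M. \<forall>v\<in>L2 M. S (\<lambda>x. u x + v x) = S u + S v) \<and>
     (\<forall>u\<in>L2 M. \<forall>c. S (\<lambda>x. c * u x) = c *\<^sub>R S u) \<and>
     (\<exists>C. \<forall>u\<in>L2 M. norm (S u) \<le> C * L2norm M u)"

text \<open>B(alpha, lambda, u) with S_h = S.\<close>
definition Bres :: "'a measure \<Rightarrow> ('a \<Rightarrow> real) \<Rightarrow> ('a \<Rightarrow> real) \<Rightarrow> (('a \<Rightarrow> real) \<Rightarrow> 'y::real_inner)
    \<Rightarrow> ('y \<Rightarrow> ('a \<Rightarrow> real)) \<Rightarrow> 'y \<Rightarrow> real \<Rightarrow> ('a \<Rightarrow> real) \<Rightarrow> ('a \<Rightarrow> real) \<Rightarrow> real" where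
  "Bres M ua ub S Sstar z \<alpha> lam u =
     (1 + 1 / \<alpha>) * L2norm M (\<lambda>x. u x - projUad ua ub (\<lambda>y. (1 / \<alpha>) * Sstar (z - S u) y + lam y) x)"

definition active_set_condition :: "'a::euclidean_space set \<Rightarrow> ('a \<Rightarrow> real) \<Rightarrow> ('a \<Rightarrow> real)
    \<Rightarrow> (('a \<Rightarrow> real) \<Rightarrow> 'y::real_inner) \<Rightarrow> ('y \<Rightarrow> ('a \<Rightarrow> real)) \<Rightarrow> 'y \<Rightarrow> ('a \<Rightarrow> real) \<Rightarrow> bool" where
  "active_set_condition \<Omega> ua ub S Sstar z ud \<longleftrightarrow>
     (let p = Sstar (z - S ud) in
      \<exists>I w \<kappa> c. I \<in> sets lebesgue \<and> I \<subseteq> \<Omega> \<and> \<kappa> > 0 \<and> c > 0 \<and>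
        {x\<in>\<Omega>. p x = 0} \<subseteq> I \<and>
        (AE x in lebesgue_on \<Omega>. x \<in> I \<longrightarrow> ud x = projUad ua ub (Sstar w) x) \<and>
        (\<forall>\<epsilon>>0. emeasure lebesgue {x\<in>\<Omega> - I. 0 < \<bar>p x\<bar> \<and> \<bar>p x\<bar> < \<epsilon>} \<le> ennreal (c * \<epsilon> powr \<kappa>)) \<and>
        Sstar w \<in> Linfty (lebesgue_on \<Omega>))"

end

theory Submission
  imports Defs
begin

(*
  Write p = S^*(z - S ud). Optimality of ud forces the bang-bang structure ud = ub where p > 0
  and ud = ua where p < 0. With gamma_k = sum_{i<=k} 1/alpha_i, the dual errors
  e_k = sum_{i<=k} (1/alpha_i) S(ud - u_i) - w satisfy S^* e_k = lam_k - S^* w - gamma_k p and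
  e_{k-1} = e_k + (1/alpha_k) S(u_k - ud). For the exact step v_k = P(lam_k), the projection
  inequality, ud = P(S^* w) on I and the bang-bang structure off I bound <S(v_k - ud), e_k> below
  by |v_k - ud|^2 up to a defect living on {0 < |p| < K/gamma_k}, a set of measure
  O(gamma_k^-kappa). As |u_k - v_k| <= eps_k and gamma_{k-1} eps_k -> 0, this gives
  |e_k|^2 <= |e_{k-1}|^2 - (1/alpha_k) (|u_k - ud|^2 - r_k) with r_k -> 0; since |e_k|^2 >= 0 and
  1/alpha_k is bounded below, |u_k - ud| cannot stay away from 0.
*)

lemma L2_borel_measurable: "f \<in> L2 M \<Longrightarrow> f \<in> borel_measurable M"
  by (simp add: L2_def)

lemma integrable_mult_L2:
  assumes "f \<in> L2 M" "g \<in> L2 M"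
  shows "integrable M (\<lambda>x. f x * g x)"
proof (rule Bochner_Integration.integrable_bound)
  show "integrable M (\<lambda>x. (f x)\<^sup>2 + (g x)\<^sup>2)"
    using assms by (simp add: L2_def)
  show "(\<lambda>x. f x * g x) \<in> borel_measurable M"
    using assms by (auto simp: L2_def intro!: borel_measurable_times)
  have "\<bar>f x * g x\<bar> \<le> (f x)\<^sup>2 + (g x)\<^sup>2" for x
    using sum_squares_bound[of "\<bar>f x\<bar>" "\<bar>g x\<bar>"]
      mult_nonneg_nonneg[OF abs_ge_zero abs_ge_zero, of "f x" "g x"]
    by (simp only: abs_mult power2_abs)
  then show "AE x in M. norm (f x * g x) \<le> norm ((f x)\<^sup>2 + (g x)\<^sup>2)"
    by simp
qed

lemma L2_add:
  assumes "f \<in> L2 M" "g \<in> L2 M"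
  shows "(\<lambda>x. f x + g x) \<in> L2 M"
proof -
  have "(\<lambda>x. (f x + g x)\<^sup>2) = (\<lambda>x. (f x)\<^sup>2 + (g x)\<^sup>2 + 2 * (f x * g x))"
    by (simp add: power2_sum mult.assoc)
  then show ?thesis
    using assms integrable_mult_L2[OF assms] by (auto simp: L2_def intro!: borel_measurable_add)
qed

lemma L2_cmult: "f \<in> L2 M \<Longrightarrow> (\<lambda>x. c * f x) \<in> L2 M"
  by (auto simp: L2_def power_mult_distrib intro!: borel_measurable_times)

lemma L2_diff:
  assumes "f \<in> L2 M" "g \<in> L2 M"
  shows "(\<lambda>x. f x - g x) \<in> L2 M"
  using L2_add[OF assms(1) L2_cmult[OF assms(2), of "-1"]] by simp

lemma L2_sum: "(\<And>i. i \<in> A \<Longrightarrow> f i \<in> L2 M) \<Longrightarrow> (\<lambda>x. \<Sum>i\<in>A. f i x) \<in> L2 M"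
proof (induction A rule: infinite_finite_induct)
  case (insert a A)
  then show ?case using L2_add[of "f a" M "\<lambda>x. \<Sum>i\<in>A. f i x"] by simp
qed (simp_all add: L2_def)

lemma L2_bounded:
  assumes "finite_measure M" "f \<in> borel_measurable M" "AE x in M. \<bar>f x\<bar> \<le> B"
  shows "f \<in> L2 M"
proof -
  have "AE x in M. norm ((f x)\<^sup>2) \<le> B\<^sup>2"
    using assms(3) by eventually_elim (simp add: abs_le_square_iff[symmetric])
  then have "integrable M (\<lambda>x. (f x)\<^sup>2)"
    using assms(2) by (intro finite_measure.integrable_const_bound[OF assms(1)]) auto
  then show ?thesis using assms(2) by (simp add: L2_def)
qed

lemma L2norm_nonneg: "0 \<le> L2norm M f"
  by (simp add: L2norm_def)

lemma L2norm_square: "(L2norm M f)\<^sup>2 = integral\<^sup>L M (\<lambda>x. (f x)\<^sup>2)"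
  by (simp add: L2norm_def integral_nonneg)

lemma L2norm_le_bound:
  assumes "finite_measure M" "f \<in> borel_measurable M" "AE x in M. \<bar>f x\<bar> \<le> B"
  shows "L2norm M f \<le> sqrt (B\<^sup>2 * measure M (space M))"
proof -
  have "integral\<^sup>L M (\<lambda>x. (f x)\<^sup>2) \<le> integral\<^sup>L M (\<lambda>x. B\<^sup>2)"
  proof (rule integral_mono_AE)
    show "integrable M (\<lambda>x. (f x)\<^sup>2)"
      using L2_bounded[OF assms] by (simp add: L2_def)
    show "integrable M (\<lambda>x. B\<^sup>2)"
      using finite_measure.integrable_const[OF assms(1)] by blast
    show "AE x in M. (f x)\<^sup>2 \<le> B\<^sup>2"
      using assms(3) by eventually_elim (simp add: abs_le_square_iff[symmetric])
  qed
  then show ?thesis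
    by (simp add: L2norm_def mult.commute)
qed

lemma L2norm_add_square_le:
  assumes "f \<in> L2 M" "g \<in> L2 M"
  shows "(L2norm M (\<lambda>x. f x + g x))\<^sup>2 \<le> 2 * (L2norm M f)\<^sup>2 + 2 * (L2norm M g)\<^sup>2"
proof -
  have "integral\<^sup>L M (\<lambda>x. (f x + g x)\<^sup>2) \<le> integral\<^sup>L M (\<lambda>x. 2 * (f x)\<^sup>2 + 2 * (g x)\<^sup>2)"
  proof (rule integral_mono)
    show "integrable M (\<lambda>x. (f x + g x)\<^sup>2)"
      using L2_add[OF assms] by (simp add: L2_def)
    show "integrable M (\<lambda>x. 2 * (f x)\<^sup>2 + 2 * (g x)\<^sup>2)"
      using assms by (simp add: L2_def)
    show "(f x + g x)\<^sup>2 \<le> 2 * (f x)\<^sup>2 + 2 * (g x)\<^sup>2" for x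
      using sum_squares_bound[of "f x" "g x"] by (simp add: power2_sum)
  qed
  also have "\<dots> = 2 * integral\<^sup>L M (\<lambda>x. (f x)\<^sup>2) + 2 * integral\<^sup>L M (\<lambda>x. (g x)\<^sup>2)"
    using assms by (simp add: L2_def)
  finally show ?thesis
    by (simp add: L2norm_square)
qed

lemma Uad_segment:
  assumes "v \<in> Uad M ua ub" "v' \<in> Uad M ua ub" "0 \<le> t" "t \<le> 1"
  shows "(\<lambda>x. v x + t * (v' x - v x)) \<in> Uad M ua ub"
proof -
  have "(\<lambda>x. v x + t * (v' x - v x)) \<in> L2 M"
    using assms by (intro L2_add L2_cmult L2_diff) (simp_all add: Uad_def)
  moreover have "AE x in M. ua x \<le> v x \<and> v x \<le> ub x" "AE x in M. ua x \<le> v' x \<and> v' x \<le> ub x"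
    using assms(1,2) by (simp_all add: Uad_def)
  then have "AE x in M. ua x \<le> v x + t * (v' x - v x) \<and> v x + t * (v' x - v x) \<le> ub x"
  proof eventually_elim
    case (elim x)
    have "v x + t * (v' x - v x) = (1 - t) * v x + t * v' x"
      by (simp add: algebra_simps)
    moreover have "(1 - t) * ua x + t * ua x \<le> (1 - t) * v x + t * v' x"
      "(1 - t) * v x + t * v' x \<le> (1 - t) * ub x + t * ub x"
      using elim assms(3,4) by (intro add_mono mult_left_mono; simp)+
    ultimately show ?case
      by (simp add: algebra_simps)
  qed
  ultimately show ?thesis
    by (simp add: Uad_def)
qed

lemma norm_add_scaleR_square:
  fixes a b :: "'a::real_inner"
  shows "(norm (a + t *\<^sub>R b))\<^sup>2 = (norm a)\<^sup>2 + 2 * t * inner a b + t\<^sup>2 * (norm b)\<^sup>2"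
  unfolding power2_norm_eq_inner by (simp add: inner_commute power2_eq_square algebra_simps)

lemma clip_variational_inequality:
  fixes a b y l :: real
  assumes "a \<le> y" "y \<le> b"
  shows "0 \<le> (l - max a (min b l)) * (max a (min b l) - y)"
  using assms by (cases "l < a"; cases "b < l") (auto simp: mult_nonpos_nonpos)

lemma clip_residual_expansion:
  fixes a b y s q g l :: real
  defines "v \<equiv> max a (min b l)"
  assumes "a \<le> y" "y \<le> b" "0 < q \<Longrightarrow> y = b" "q < 0 \<Longrightarrow> y = a"
  shows "(v - y) * (l - (s + g * q))
    = (l - v) * (v - y) + (v - y)\<^sup>2 + (y - s) * (v - y) + g * \<bar>q\<bar> * \<bar>v - y\<bar>"
proof -
  have "a \<le> v" "v \<le> b"
    using assms by (auto simp: v_def)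
  then have "q * (y - v) = \<bar>q\<bar> * \<bar>v - y\<bar>"
    using assms by (cases "0 < q"; cases "q < 0") (auto simp: algebra_simps)
  moreover have "(v - y) * (l - (s + g * q))
      = (l - v) * (v - y) + (v - y)\<^sup>2 + (y - s) * (v - y) + g * (q * (y - v))"
    by (simp add: power2_eq_square algebra_simps)
  ultimately show ?thesis
    by simp
qed

(* Of the summands in clip_residual_expansion, the first is nonnegative by the projection
   property and the second is the main term. The third is nonnegative under the source condition
   y = max a (min b s) and at least -K |v - y| otherwise, which the fourth compensates where
   K <= g |q|; a defect remains only where neither applies. *)
lemma clip_residual_lower_bound:
  fixes a b y s q g K l :: real
  defines "v \<equiv> max a (min b l)"
  assumes box: "a \<le> y" "y \<le> b"
    and bang_bang: "0 < q \<Longrightarrow> y = b" "q < 0 \<Longrightarrow> y = a"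
    and "0 < g" and source_dist: "\<bar>y - s\<bar> \<le> K"
  shows "(v - y)\<^sup>2 - (if y = max a (min b s) \<or> K \<le> g * \<bar>q\<bar> then 0 else K * \<bar>v - y\<bar>)
    \<le> (v - y) * (l - (s + g * q))"
proof -
  have "a \<le> v" "v \<le> b"
    using box by (auto simp: v_def)
  have projection: "0 \<le> (l - v) * (v - y)"
    unfolding v_def using box by (rule clip_variational_inequality)
  have "\<bar>(y - s) * (v - y)\<bar> \<le> K * \<bar>v - y\<bar>"
    using source_dist by (simp add: abs_mult mult_right_mono)
  then have source_term: "- (K * \<bar>v - y\<bar>) \<le> (y - s) * (v - y)"
    by linarith
  have bang_bang_term: "0 \<le> g * \<bar>q\<bar> * \<bar>v - y\<bar>"
    using \<open>0 < g\<close> by simp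
  have "0 \<le> (y - s) * (v - y) + g * \<bar>q\<bar> * \<bar>v - y\<bar>" if "y = max a (min b s) \<or> K \<le> g * \<bar>q\<bar>"
  proof (cases "y = max a (min b s)")
    case True
    then have "0 \<le> (y - s) * (v - y)"
      using clip_variational_inequality[OF \<open>a \<le> v\<close> \<open>v \<le> b\<close>, of s] by (simp add: algebra_simps)
    then show ?thesis
      using bang_bang_term by linarith
  next
    case False
    with that have "K * \<bar>v - y\<bar> \<le> g * \<bar>q\<bar> * \<bar>v - y\<bar>"
      by (simp add: mult_right_mono)
    then show ?thesis
      using source_term by linarith
  qed
  then show ?thesis
    using clip_residual_expansion[where s = s and g = g and l = l, OF box bang_bang, folded v_def]
      projection source_term bang_bang_term
    by (cases "y = max a (min b s) \<or> K \<le> g * \<bar>q\<bar>") simp_all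
qed

lemma nonneg_if_nonneg_perturbations:
  fixes a b :: real
  assumes "\<And>t. 0 < t \<Longrightarrow> t \<le> 1 \<Longrightarrow> 0 \<le> a + t * b"
  shows "0 \<le> a"
proof (rule tendsto_lowerbound)
  show "((\<lambda>t. a + t * b) \<longlongrightarrow> a) (at_right 0)"
    by (auto intro!: tendsto_eq_intros)
  show "\<forall>\<^sub>F t in at_right 0. 0 \<le> a + t * b"
  proof -
    have "\<forall>\<^sub>F t in at_right 0. t \<in> {0<..<1::real}"
      by (rule eventually_at_right_real) simp
    then show ?thesis
      by eventually_elim (auto intro: assms)
  qed
qed simp

lemma sum_inverse_ge:
  fixes \<alpha> :: "nat \<Rightarrow> real"
  assumes "\<And>j. 0 < \<alpha> j" "\<And>j. \<alpha> j \<le> A"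
  shows "real m / A \<le> (\<Sum>j=1..m. 1 / \<alpha> j)"
proof -
  have "(\<Sum>j=1..m. 1 / A) \<le> (\<Sum>j=1..m. 1 / \<alpha> j)"
    using assms by (intro sum_mono divide_left_mono) (auto intro!: mult_pos_pos less_le_trans[OF assms])
  then show ?thesis
    by simp
qed

lemma descent_imp_small_term:
  fixes E a d r :: "nat \<Rightarrow> real"
  assumes E_nonneg: "\<And>k. 0 \<le> E k"
    and a_ge: "\<And>k. a0 \<le> a k" and "0 < a0"
    and "r \<longlonglongrightarrow> 0"
    and descent: "\<And>k. E (Suc k) \<le> E k - a (Suc k) * (d (Suc k) - r (Suc k))"
    and "0 < \<rho>"
  shows "\<exists>i\<ge>1. d i < \<rho>"
proof (rule ccontr)
  assume "\<not> ?thesis"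
  then have d_ge: "\<rho> \<le> d i" if "1 \<le> i" for i
    using that by force
  obtain N where r_small: "\<And>k. N \<le> k \<Longrightarrow> r k < \<rho> / 2"
    using order_tendstoD(2)[OF \<open>r \<longlonglongrightarrow> 0\<close>, of "\<rho> / 2"] \<open>0 < \<rho>\<close>
    unfolding eventually_sequentially by auto
  define q where "q = a0 * (\<rho> / 2)"
  have "0 < q"
    using \<open>0 < a0\<close> \<open>0 < \<rho>\<close> by (simp add: q_def)
  have decrease: "E (Suc k) \<le> E k - q" if "N \<le> k" for k
  proof -
    have "\<rho> / 2 \<le> d (Suc k) - r (Suc k)"
      using d_ge[of "Suc k"] r_small[of "Suc k"] that by simp
    then have "q \<le> a (Suc k) * (d (Suc k) - r (Suc k))"
      unfolding q_def using a_ge[of "Suc k"] \<open>0 < a0\<close> \<open>0 < \<rho>\<close>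
      by (intro mult_mono) auto
    then show ?thesis
      using descent[of k] by linarith
  qed
  have iterate: "E (N + j) \<le> E N - real j * q" for j
  proof (induction j)
    case (Suc j)
    then show ?case
      using decrease[of "N + j"] by (simp add: algebra_simps)
  qed simp
  obtain j where "E N < real j * q"
    using ex_less_of_nat_mult[OF \<open>0 < q\<close>] by blast
  then show False
    using iterate[of j] E_nonneg[of "N + j"] by linarith
qed

lemma Min_prefix_tendsto_zero:
  fixes d :: "nat \<Rightarrow> real"
  assumes "\<And>i. 0 \<le> d i" "\<And>\<rho>. 0 < \<rho> \<Longrightarrow> \<exists>i\<ge>1. d i < \<rho>"
  shows "(\<lambda>k. Min (d ` {1..k})) \<longlonglongrightarrow> 0"
proof (rule LIMSEQ_I)
  fix \<rho> :: real
  assume "0 < \<rho>"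
  then obtain i where "1 \<le> i" "d i < \<rho>"
    using assms(2) by blast
  have "\<bar>Min (d ` {1..k})\<bar> < \<rho>" if "i \<le> k" for k
  proof -
    have "Min (d ` {1..k}) \<le> d i"
      using \<open>1 \<le> i\<close> that by (intro Min_le) auto
    moreover have "0 \<le> Min (d ` {1..k})"
      using \<open>1 \<le> i\<close> that assms(1) by (subst Min_ge_iff) auto
    ultimately show ?thesis
      using \<open>d i < \<rho>\<close> by linarith
  qed
  then show "\<exists>N. \<forall>k\<ge>N. norm (Min (d ` {1..k}) - 0) < \<rho>"
    by auto
qed

locale L2_operator =
  fixes M :: "'a measure" and S :: "('a \<Rightarrow> real) \<Rightarrow> 'y::real_inner" and Sstar :: "'y \<Rightarrow> 'a \<Rightarrow> real"
  assumes finite_M: "finite_measure M"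
    and linear_S: "bounded_linear_L2 M S"
    and adjoint_Sstar: "is_adjoint M S Sstar"
begin

lemma S_add: "f \<in> L2 M \<Longrightarrow> g \<in> L2 M \<Longrightarrow> S (\<lambda>x. f x + g x) = S f + S g"
  using linear_S by (simp add: bounded_linear_L2_def)

lemma S_cmult: "f \<in> L2 M \<Longrightarrow> S (\<lambda>x. c * f x) = c *\<^sub>R S f"
  using linear_S by (simp add: bounded_linear_L2_def)

lemma S_diff:
  assumes "f \<in> L2 M" "g \<in> L2 M"
  shows "S (\<lambda>x. f x - g x) = S f - S g"
  using S_add[OF assms(1) L2_cmult[OF assms(2)], of "-1"] S_cmult[OF assms(2), of "-1"] by simp

lemma S_bound:
  obtains C where "0 \<le> C" "\<And>f. f \<in> L2 M \<Longrightarrow> norm (S f) \<le> C * L2norm M f"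
proof -
  obtain C where C: "\<And>f. f \<in> L2 M \<Longrightarrow> norm (S f) \<le> C * L2norm M f"
    using linear_S unfolding bounded_linear_L2_def by blast
  have "norm (S f) \<le> max C 0 * L2norm M f" if "f \<in> L2 M" for f
  proof -
    have "C * L2norm M f \<le> max C 0 * L2norm M f"
      by (intro mult_right_mono) (simp_all add: L2norm_nonneg)
    then show ?thesis
      using C[OF that] by linarith
  qed
  moreover have "0 \<le> max C 0"
    by (rule max.cobounded2)
  ultimately show thesis
    using that by blast
qed

lemma Sstar_L2: "Sstar y \<in> L2 M"
  using adjoint_Sstar by (simp add: is_adjoint_def)

lemma inner_S_eq_integral: "f \<in> L2 M \<Longrightarrow> inner (S f) y = integral\<^sup>L M (\<lambda>x. f x * Sstar y x)"
  using adjoint_Sstar by (simp add: is_adjoint_def)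

end

locale box_least_squares = L2_operator +
  fixes ua ub ud :: "'a \<Rightarrow> real" and z :: "'y::real_inner"
  assumes ua_Linfty: "ua \<in> Linfty M" and ub_Linfty: "ub \<in> Linfty M"
    and ua_le_ub: "AE x in M. ua x \<le> ub x"
    and ud_Uad: "ud \<in> Uad M ua ub"
    and ud_minimal: "\<And>v. v \<in> Uad M ua ub \<Longrightarrow> norm (S ud - z) \<le> norm (S v - z)"
begin

definition pd :: "'a \<Rightarrow> real" where
  "pd = Sstar (z - S ud)"

lemma pd_L2: "pd \<in> L2 M"
  by (simp add: pd_def Sstar_L2)

lemma ud_L2: "ud \<in> L2 M"
  using ud_Uad by (simp add: Uad_def)

lemma box_bounded:
  obtains R where "0 \<le> R" "\<And>v. AE x in M. ua x \<le> v x \<and> v x \<le> ub x \<Longrightarrow> AE x in M. \<bar>v x\<bar> \<le> R"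
proof -
  obtain Ca Cb where "AE x in M. \<bar>ua x\<bar> \<le> Ca" "AE x in M. \<bar>ub x\<bar> \<le> Cb"
    using ua_Linfty ub_Linfty by (auto simp: Linfty_def)
  then have "AE x in M. \<bar>v x\<bar> \<le> \<bar>Ca\<bar> + \<bar>Cb\<bar>" if "AE x in M. ua x \<le> v x \<and> v x \<le> ub x" for v
    using that by eventually_elim auto
  moreover have "0 \<le> \<bar>Ca\<bar> + \<bar>Cb\<bar>"
    by simp
  ultimately show thesis
    using that by blast
qed

lemma clip_in_box: "AE x in M. ua x \<le> projUad ua ub f x \<and> projUad ua ub f x \<le> ub x"
  using ua_le_ub by eventually_elim (auto simp: projUad_def)

lemma clip_in_Uad:
  assumes "f \<in> borel_measurable M"
  shows "projUad ua ub f \<in> Uad M ua ub"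
proof -
  obtain R where "AE x in M. \<bar>projUad ua ub f x\<bar> \<le> R"
    using box_bounded clip_in_box by metis
  moreover have "projUad ua ub f \<in> borel_measurable M"
    using assms ua_Linfty ub_Linfty
    by (auto simp: projUad_def Linfty_def intro!: borel_measurable_max borel_measurable_min)
  ultimately show ?thesis
    using L2_bounded[OF finite_M] clip_in_box by (simp add: Uad_def)
qed

lemma first_order_optimality:
  assumes "v \<in> Uad M ua ub"
  shows "integral\<^sup>L M (\<lambda>x. (v x - ud x) * pd x) \<le> 0"
proof -
  define h where "h = (\<lambda>x. v x - ud x)"
  have h_L2: "h \<in> L2 M"
    using assms ud_L2 by (simp add: h_def Uad_def L2_diff)
  have "0 \<le> 2 * inner (S ud - z) (S h) + t * (norm (S h))\<^sup>2" if "0 < t" "t \<le> 1" for t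
  proof -
    have "(\<lambda>x. ud x + t * h x) \<in> Uad M ua ub"
      using Uad_segment[OF ud_Uad assms, of t] that by (simp add: h_def)
    then have "norm (S ud - z) \<le> norm (S (\<lambda>x. ud x + t * h x) - z)"
      by (rule ud_minimal)
    also have "S (\<lambda>x. ud x + t * h x) - z = (S ud - z) + t *\<^sub>R S h"
      using S_add[OF ud_L2 L2_cmult[OF h_L2]] S_cmult[OF h_L2] by simp
    finally have "(norm (S ud - z))\<^sup>2 \<le> (norm ((S ud - z) + t *\<^sub>R S h))\<^sup>2"
      by (rule power_mono) simp
    then have "0 \<le> t * (2 * inner (S ud - z) (S h) + t * (norm (S h))\<^sup>2)"
      unfolding norm_add_scaleR_square by (simp add: power2_eq_square algebra_simps)
    then show ?thesis
      using \<open>0 < t\<close> by (simp add: zero_le_mult_iff)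
  qed
  then have "0 \<le> 2 * inner (S ud - z) (S h)"
    by (rule nonneg_if_nonneg_perturbations)
  moreover have "inner (S ud - z) (S h) = - integral\<^sup>L M (\<lambda>x. h x * pd x)"
    using inner_S_eq_integral[OF h_L2, of "z - S ud"]
    by (simp add: pd_def inner_commute inner_diff_right)
  ultimately show ?thesis
    by (simp add: h_def)
qed

lemma bang_bang: "AE x in M. (0 < pd x \<longrightarrow> ud x = ub x) \<and> (pd x < 0 \<longrightarrow> ud x = ua x)"
proof -
  define v where "v x = (if 0 < pd x then ub x else if pd x < 0 then ua x else ud x)" for x
  have ud_box: "AE x in M. ua x \<le> ud x \<and> ud x \<le> ub x"
    using ud_Uad by (simp add: Uad_def)
  then have v_box: "AE x in M. ua x \<le> v x \<and> v x \<le> ub x"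
    by eventually_elim (auto simp: v_def)
  have pd_measurable [measurable]: "pd \<in> borel_measurable M"
    using pd_L2 by (rule L2_borel_measurable)
  have [measurable]: "ua \<in> borel_measurable M" "ub \<in> borel_measurable M" "ud \<in> borel_measurable M"
    using ua_Linfty ub_Linfty ud_L2 by (simp_all add: Linfty_def L2_borel_measurable)
  have "v \<in> borel_measurable M"
    unfolding v_def by measurable
  moreover obtain R where "AE x in M. \<bar>v x\<bar> \<le> R"
    using box_bounded v_box by metis
  ultimately have "v \<in> Uad M ua ub"
    using L2_bounded[OF finite_M] v_box by (simp add: Uad_def)
  then have "integral\<^sup>L M (\<lambda>x. (v x - ud x) * pd x) \<le> 0"
    by (rule first_order_optimality)
  moreover have nonneg: "AE x in M. 0 \<le> (v x - ud x) * pd x"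
    using ud_box by eventually_elim (auto simp: v_def mult_nonpos_nonpos)
  moreover have "integrable M (\<lambda>x. (v x - ud x) * pd x)"
    using \<open>v \<in> Uad M ua ub\<close> ud_L2 pd_L2 by (intro integrable_mult_L2 L2_diff) (simp_all add: Uad_def)
  moreover note integral_nonneg_eq_0_iff_AE[OF _ nonneg]
  ultimately have "AE x in M. (v x - ud x) * pd x = 0"
    using integral_nonneg_AE[OF nonneg] by simp
  then show ?thesis
    by eventually_elim (auto simp: v_def split: if_splits)
qed

end

locale active_set = box_least_squares +
  fixes I :: "'a set" and w and \<kappa> c :: real
  assumes I_sets: "I \<in> sets M"
    and \<kappa>_pos: "0 < \<kappa>"
    and pd_zero_subset_I: "{x \<in> space M. Sstar (z - S ud) x = 0} \<subseteq> I"
    and ud_on_I: "AE x in M. x \<in> I \<longrightarrow> ud x = projUad ua ub (Sstar w) x"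
    and measure_small_pd: "\<And>t. 0 < t \<Longrightarrow>
      measure M {x \<in> space M - I. 0 < \<bar>Sstar (z - S ud) x\<bar> \<and> \<bar>Sstar (z - S ud) x\<bar> < t} \<le> c * t powr \<kappa>"
    and source_Linfty: "Sstar w \<in> Linfty M"
begin

definition small_pd_set :: "real \<Rightarrow> 'a set" where
  "small_pd_set t = {x \<in> space M - I. 0 < \<bar>pd x\<bar> \<and> \<bar>pd x\<bar> < t}"

lemma small_pd_set_sets: "small_pd_set t \<in> sets M"
proof -
  have [measurable]: "pd \<in> borel_measurable M"
    using pd_L2 by (rule L2_borel_measurable)
  have "small_pd_set t = (space M - I) \<inter> {x \<in> space M. 0 < \<bar>pd x\<bar> \<and> \<bar>pd x\<bar> < t}"
    by (auto simp: small_pd_set_def)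
  then show ?thesis
    using I_sets by simp
qed

lemma pointwise_active_set_estimate:
  assumes "0 < g"
    and K: "AE x in M. \<bar>ud x - Sstar w x\<bar> \<le> K"
    and B: "AE x in M. \<bar>projUad ua ub l x - ud x\<bar> \<le> B"
  shows "AE x in M. (projUad ua ub l x - ud x)\<^sup>2 - K * B * indicator (small_pd_set (K / g)) x
    \<le> (projUad ua ub l x - ud x) * (l x - (Sstar w x + g * pd x))"
proof -
  have ud_box: "AE x in M. ua x \<le> ud x \<and> ud x \<le> ub x"
    using ud_Uad by (simp add: Uad_def)
  from ud_box bang_bang ud_on_I K B AE_space show ?thesis
  proof eventually_elim
    case (elim x)
    let ?v = "projUad ua ub l x"
    let ?defect = "if ud x = projUad ua ub (Sstar w) x \<or> K \<le> g * \<bar>pd x\<bar> then 0 else K * \<bar>?v - ud x\<bar>"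
    have "(?v - ud x)\<^sup>2 - ?defect \<le> (?v - ud x) * (l x - (Sstar w x + g * pd x))"
      unfolding projUad_def using elim \<open>0 < g\<close> by (intro clip_residual_lower_bound) auto
    moreover have "?defect \<le> K * B * indicator (small_pd_set (K / g)) x"
    proof (cases "ud x = projUad ua ub (Sstar w) x \<or> K \<le> g * \<bar>pd x\<bar>")
      case False
      then have "x \<notin> I"
        using elim by blast
      then have "pd x \<noteq> 0"
        using pd_zero_subset_I elim by (auto simp: pd_def)
      moreover have "\<bar>pd x\<bar> < K / g"
        using False \<open>0 < g\<close> by (simp add: pos_less_divide_eq mult.commute)
      ultimately have "x \<in> small_pd_set (K / g)"
        using \<open>x \<notin> I\<close> elim by (simp add: small_pd_set_def)
      then show ?thesis
        using False elim by (simp add: mult_left_mono)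
    qed (use elim in simp)
    ultimately show ?case
      by linarith
  qed
qed

lemma integral_active_set_estimate:
  assumes l: "l \<in> L2 M" and "0 < g" "0 < K" "0 \<le> B"
    and K: "AE x in M. \<bar>ud x - Sstar w x\<bar> \<le> K"
    and B: "AE x in M. \<bar>projUad ua ub l x - ud x\<bar> \<le> B"
  shows "(L2norm M (\<lambda>x. projUad ua ub l x - ud x))\<^sup>2 - K * B * c * (K / g) powr \<kappa>
    \<le> integral\<^sup>L M (\<lambda>x. (projUad ua ub l x - ud x) * (l x - (Sstar w x + g * pd x)))"
proof -
  define v where "v = projUad ua ub l"
  define E where "E = small_pd_set (K / g)"
  have v_L2: "v \<in> L2 M"
    using clip_in_Uad[OF L2_borel_measurable[OF l]] by (simp add: v_def Uad_def)
  have integrable_indicator: "integrable M (indicator E :: 'a \<Rightarrow> real)"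
    using small_pd_set_sets finite_measure.emeasure_finite[OF finite_M, of E]
    by (simp add: E_def less_top)
  have integrable_square: "integrable M (\<lambda>x. (v x - ud x)\<^sup>2)"
    using L2_diff[OF v_L2 ud_L2] by (simp add: L2_def)
  have integrable_product: "integrable M (\<lambda>x. (v x - ud x) * (l x - (Sstar w x + g * pd x)))"
    by (intro integrable_mult_L2 L2_diff L2_add L2_cmult v_L2 ud_L2 l Sstar_L2 pd_L2)
  have "(L2norm M (\<lambda>x. v x - ud x))\<^sup>2 - K * B * measure M E
      = integral\<^sup>L M (\<lambda>x. (v x - ud x)\<^sup>2 - K * B * indicator E x)"
    using integrable_square integrable_indicator small_pd_set_sets
    by (simp add: E_def L2norm_square Int_absorb1 sets.sets_into_space)
  also have "\<dots> \<le> integral\<^sup>L M (\<lambda>x. (v x - ud x) * (l x - (Sstar w x + g * pd x)))"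
    using integrable_square integrable_indicator
      pointwise_active_set_estimate[OF \<open>0 < g\<close> K B, folded v_def E_def]
    by (intro integral_mono_AE[OF _ integrable_product]) simp_all
  finally have integral_bound: "(L2norm M (\<lambda>x. v x - ud x))\<^sup>2 - K * B * measure M E
      \<le> integral\<^sup>L M (\<lambda>x. (v x - ud x) * (l x - (Sstar w x + g * pd x)))" .
  have "measure M E \<le> c * (K / g) powr \<kappa>"
    using measure_small_pd[of "K / g"] \<open>0 < K\<close> \<open>0 < g\<close> by (simp add: E_def small_pd_set_def pd_def)
  then have "K * B * measure M E \<le> K * B * (c * (K / g) powr \<kappa>)"
    using \<open>0 < K\<close> \<open>0 \<le> B\<close> by (intro mult_left_mono) auto
  then show ?thesis
    using integral_bound unfolding v_def by (simp add: mult.assoc)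
qed

lemma active_set_estimate:
  obtains K L where "0 < K" "\<And>l g. l \<in> L2 M \<Longrightarrow> 0 < g \<Longrightarrow>
    (L2norm M (\<lambda>x. projUad ua ub l x - ud x))\<^sup>2 - L * (K / g) powr \<kappa>
      \<le> integral\<^sup>L M (\<lambda>x. (projUad ua ub l x - ud x) * (l x - (Sstar w x + g * pd x)))"
proof -
  obtain R where "0 \<le> R" and
    R: "\<And>v. AE x in M. ua x \<le> v x \<and> v x \<le> ub x \<Longrightarrow> AE x in M. \<bar>v x\<bar> \<le> R"
    using box_bounded by blast
  obtain Cs where Cs: "AE x in M. \<bar>Sstar w x\<bar> \<le> Cs"
    using source_Linfty by (auto simp: Linfty_def)
  define K where "K = R + \<bar>Cs\<bar> + 1"
  have "0 < K"
    using \<open>0 \<le> R\<close> by (simp add: K_def)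
  have ud_bound: "AE x in M. \<bar>ud x\<bar> \<le> R"
    using R ud_Uad by (simp add: Uad_def)
  then have "AE x in M. \<bar>ud x - Sstar w x\<bar> \<le> K"
    using Cs unfolding K_def by eventually_elim linarith
  moreover have "AE x in M. \<bar>projUad ua ub l x - ud x\<bar> \<le> 2 * R" for l
    using R[OF clip_in_box[of l]] ud_bound by eventually_elim linarith
  ultimately have "(L2norm M (\<lambda>x. projUad ua ub l x - ud x))\<^sup>2 - K * (2 * R) * c * (K / g) powr \<kappa>
      \<le> integral\<^sup>L M (\<lambda>x. (projUad ua ub l x - ud x) * (l x - (Sstar w x + g * pd x)))"
    if "l \<in> L2 M" "0 < g" for l g
    using that \<open>0 < K\<close> \<open>0 \<le> R\<close> by (intro integral_active_set_estimate) auto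
  with \<open>0 < K\<close> show thesis
    by (rule that)
qed

end

locale inexact_bregman = active_set +
  fixes \<alpha> \<epsilon> :: "nat \<Rightarrow> real" and u lam :: "nat \<Rightarrow> 'a \<Rightarrow> real"
  assumes \<alpha>_pos: "\<And>k. 0 < \<alpha> k"
    and \<alpha>_bounded: "bounded (range \<alpha>)"
    and \<epsilon>_pos: "\<And>k. 0 < \<epsilon> k"
    and sum_inverse_\<alpha>_\<epsilon>_tendsto_0: "(\<lambda>i. (\<Sum>j=1..i - 1. 1 / \<alpha> j) * \<epsilon> i) \<longlonglongrightarrow> 0"
    and lam_0: "lam 0 = (\<lambda>x. 0)"
    and u_Uad: "\<And>k. 1 \<le> k \<Longrightarrow> u k \<in> Uad M ua ub"
    and residual_le: "\<And>k. 1 \<le> k \<Longrightarrow> Bres M ua ub S Sstar z (\<alpha> k) (lam (k - 1)) (u k) \<le> \<epsilon> k"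
    and lam_step: "\<And>k. 1 \<le> k \<Longrightarrow> lam k = (\<lambda>x. \<Sum>i=1..k. (1 / \<alpha> i) * Sstar (z - S (u i)) x)"
begin

definition \<gamma> :: "nat \<Rightarrow> real" where
  "\<gamma> k = (\<Sum>j=1..k. 1 / \<alpha> j)"

definition proj_lam :: "nat \<Rightarrow> 'a \<Rightarrow> real" where
  "proj_lam k = projUad ua ub (lam k)"

definition \<delta> :: "nat \<Rightarrow> real" where
  "\<delta> k = L2norm M (\<lambda>x. u k x - proj_lam k x)"

(* S^* (e k) = lam k - (S^* w + gamma k * pd) by inner_S_e, and the norm of e k is the
   Lyapunov function of the descent argument. *)
definition e where
  "e k = (\<Sum>i=1..k. (1 / \<alpha> i) *\<^sub>R (S ud - S (u i))) - w"

lemma \<alpha>_le: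
  obtains A where "0 < A" "\<And>k. \<alpha> k \<le> A"
proof -
  obtain A where "\<And>k. \<bar>\<alpha> k\<bar> \<le> A"
    using \<alpha>_bounded unfolding bounded_real by blast
  then have "\<alpha> k \<le> A" for k
    using abs_ge_self order_trans by blast
  moreover have "0 < A"
    using \<alpha>_pos[of 0] \<open>\<alpha> 0 \<le> A\<close> by linarith
  ultimately show thesis
    using that by blast
qed

lemma \<gamma>_0 [simp]: "\<gamma> 0 = 0"
  by (simp add: \<gamma>_def)

lemma \<gamma>_Suc: "\<gamma> (Suc k) = \<gamma> k + 1 / \<alpha> (Suc k)"
  by (simp add: \<gamma>_def)

lemma \<gamma>_mono: "mono \<gamma>"
  using \<alpha>_pos by (intro incseq_SucI) (simp add: \<gamma>_Suc less_imp_le)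

lemma \<gamma>_nonneg: "0 \<le> \<gamma> k"
  using monoD[OF \<gamma>_mono, of 0 k] by simp

lemma \<gamma>_pos:
  assumes "1 \<le> k"
  shows "0 < \<gamma> k"
proof -
  have "0 < \<gamma> 1"
    using \<alpha>_pos[of 1] by (simp add: \<gamma>_def)
  then show ?thesis
    using monoD[OF \<gamma>_mono assms] by linarith
qed

lemma \<gamma>_at_top: "filterlim \<gamma> at_top sequentially"
proof -
  obtain A where "0 < A" "\<And>k. \<alpha> k \<le> A"
    using \<alpha>_le by blast
  then have "\<forall>\<^sub>F k in sequentially. real k * (1 / A) \<le> \<gamma> k"
    using sum_inverse_ge[of \<alpha> A] \<alpha>_pos by (intro always_eventually) (simp add: \<gamma>_def)
  moreover have "filterlim (\<lambda>k. real k * (1 / A)) at_top sequentially"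
    using \<open>0 < A\<close> by (intro filterlim_at_top_mult_tendsto_pos[OF tendsto_const] filterlim_real_sequentially) simp
  ultimately show ?thesis
    using filterlim_at_top_mono by blast
qed

lemma \<gamma>_\<epsilon>_tendsto_0: "(\<lambda>k. \<gamma> (k - 1) * \<epsilon> k) \<longlonglongrightarrow> 0"
  using sum_inverse_\<alpha>_\<epsilon>_tendsto_0 by (simp add: \<gamma>_def)

lemma \<epsilon>_tendsto_0: "\<epsilon> \<longlonglongrightarrow> 0"
proof (rule Lim_null_comparison)
  have "norm (\<epsilon> k) \<le> (1 / \<gamma> 1) * (\<gamma> (k - 1) * \<epsilon> k)" if "2 \<le> k" for k
  proof -
    have "\<gamma> 1 \<le> \<gamma> (k - 1)"
      using monoD[OF \<gamma>_mono, of 1 "k - 1"] that by simp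
    then have "1 \<le> \<gamma> (k - 1) / \<gamma> 1"
      using \<gamma>_pos[of 1] by simp
    then have "1 * \<epsilon> k \<le> (\<gamma> (k - 1) / \<gamma> 1) * \<epsilon> k"
      using \<epsilon>_pos[of k] by (intro mult_right_mono) auto
    then show ?thesis
      using \<epsilon>_pos[of k] by simp
  qed
  then show "\<forall>\<^sub>F k in sequentially. norm (\<epsilon> k) \<le> (1 / \<gamma> 1) * (\<gamma> (k - 1) * \<epsilon> k)"
    unfolding eventually_sequentially by blast
  show "(\<lambda>k. (1 / \<gamma> 1) * (\<gamma> (k - 1) * \<epsilon> k)) \<longlonglongrightarrow> 0"
    by (rule tendsto_mult_right_zero[OF \<gamma>_\<epsilon>_tendsto_0])
qed

lemma lam_eq: "lam k = (\<lambda>x. \<Sum>i=1..k. (1 / \<alpha> i) * Sstar (z - S (u i)) x)"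
  using lam_0 lam_step[of k] by (cases k) auto

lemma lam_L2: "lam k \<in> L2 M"
  unfolding lam_eq by (intro L2_sum L2_cmult Sstar_L2)

lemma proj_lam_L2: "proj_lam k \<in> L2 M"
  using clip_in_Uad[OF L2_borel_measurable[OF lam_L2]] by (simp add: proj_lam_def Uad_def)

lemma u_L2: "1 \<le> k \<Longrightarrow> u k \<in> L2 M"
  using u_Uad by (simp add: Uad_def)

lemma S_dist_split:
  assumes "1 \<le> k"
  shows "S (u k) - S ud = S (\<lambda>x. proj_lam k x - ud x) + S (\<lambda>x. u k x - proj_lam k x)"
  using S_diff[OF proj_lam_L2 ud_L2] S_diff[OF u_L2[OF assms] proj_lam_L2] by simp

lemma dist_square_le:
  assumes "1 \<le> k"
  shows "(L2norm M (\<lambda>x. u k x - ud x))\<^sup>2 \<le> 2 * (L2norm M (\<lambda>x. proj_lam k x - ud x))\<^sup>2 + 2 * (\<delta> k)\<^sup>2"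
  using L2norm_add_square_le[OF L2_diff[OF proj_lam_L2[of k] ud_L2] L2_diff[OF u_L2[OF assms] proj_lam_L2[of k]]]
  by (simp add: \<delta>_def)

lemma residual_bound:
  assumes "1 \<le> k"
  shows "\<delta> k \<le> \<epsilon> k" "\<delta> k / \<alpha> k \<le> \<epsilon> k"
proof -
  obtain m where k: "k = Suc m"
    using assms by (cases k) auto
  have "(\<lambda>x. (1 / \<alpha> k) * Sstar (z - S (u k)) x + lam (k - 1) x) = lam k"
    unfolding k lam_eq by (simp add: algebra_simps)
  then have "Bres M ua ub S Sstar z (\<alpha> k) (lam (k - 1)) (u k) = \<delta> k + \<delta> k / \<alpha> k"
    by (simp add: Bres_def \<delta>_def proj_lam_def algebra_simps)
  moreover have "0 \<le> \<delta> k" "0 \<le> \<delta> k / \<alpha> k"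
    using \<alpha>_pos[of k] by (simp_all add: \<delta>_def L2norm_nonneg)
  ultimately show "\<delta> k \<le> \<epsilon> k" "\<delta> k / \<alpha> k \<le> \<epsilon> k"
    using residual_le[OF assms] by linarith+
qed

lemma \<delta>_tendsto_0: "\<delta> \<longlonglongrightarrow> 0"
proof (rule Lim_null_comparison[OF _ \<epsilon>_tendsto_0])
  show "\<forall>\<^sub>F k in sequentially. norm (\<delta> k) \<le> \<epsilon> k"
    unfolding eventually_sequentially
    using residual_bound(1) by (auto simp: \<delta>_def L2norm_nonneg)
qed

lemma \<gamma>_\<delta>_tendsto_0: "(\<lambda>k. \<gamma> k * \<delta> k) \<longlonglongrightarrow> 0"
proof (rule Lim_null_comparison)
  have "norm (\<gamma> k * \<delta> k) \<le> \<gamma> (k - 1) * \<epsilon> k + \<epsilon> k" if k1: "1 \<le> k" for k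
  proof -
    obtain m where k: "k = Suc m"
      using k1 by (cases k) auto
    have "\<gamma> k * \<delta> k = \<gamma> (k - 1) * \<delta> k + \<delta> k / \<alpha> k"
      by (simp add: k \<gamma>_Suc algebra_simps)
    also have "\<dots> \<le> \<gamma> (k - 1) * \<epsilon> k + \<epsilon> k"
      using residual_bound[OF k1] \<gamma>_nonneg by (intro add_mono mult_left_mono) auto
    finally show ?thesis
      using \<gamma>_nonneg[of k] by (simp add: \<delta>_def L2norm_nonneg)
  qed
  then show "\<forall>\<^sub>F k in sequentially. norm (\<gamma> k * \<delta> k) \<le> \<gamma> (k - 1) * \<epsilon> k + \<epsilon> k"
    unfolding eventually_sequentially by blast
  show "(\<lambda>k. \<gamma> (k - 1) * \<epsilon> k + \<epsilon> k) \<longlonglongrightarrow> 0"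
    using tendsto_add_zero[OF \<gamma>_\<epsilon>_tendsto_0 \<epsilon>_tendsto_0] .
qed

lemma e_Suc: "e (Suc k) = e k + (1 / \<alpha> (Suc k)) *\<^sub>R (S ud - S (u (Suc k)))"
  by (simp add: e_def algebra_simps)

lemma inner_S_e:
  assumes f: "f \<in> L2 M"
  shows "inner (S f) (e k) = integral\<^sup>L M (\<lambda>x. f x * (lam k x - (Sstar w x + \<gamma> k * pd x)))"
proof -
  have integrable: "integrable M (\<lambda>x. f x * Sstar y x)" for y
    by (rule integrable_mult_L2[OF f Sstar_L2])
  have inner_increment: "inner (S f) (S ud - S (u i))
      = integral\<^sup>L M (\<lambda>x. f x * Sstar (z - S (u i)) x) - integral\<^sup>L M (\<lambda>x. f x * pd x)" for i
  proof -
    have "inner (S f) (S ud - S (u i)) = inner (S f) (z - S (u i)) - inner (S f) (z - S ud)"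
      by (simp add: inner_diff_right)
    then show ?thesis
      by (simp only: inner_S_eq_integral[OF f] pd_def)
  qed
  have "inner (S f) (e k) = (\<Sum>i=1..k. (1 / \<alpha> i) * inner (S f) (S ud - S (u i))) - inner (S f) w"
    by (simp add: e_def inner_diff_right inner_sum_right)
  also have "\<dots> = (\<Sum>i=1..k. (1 / \<alpha> i) * integral\<^sup>L M (\<lambda>x. f x * Sstar (z - S (u i)) x))
        - \<gamma> k * integral\<^sup>L M (\<lambda>x. f x * pd x) - integral\<^sup>L M (\<lambda>x. f x * Sstar w x)"
    by (simp add: inner_increment inner_S_eq_integral[OF f, of w] \<gamma>_def right_diff_distrib
        sum_subtractf sum_distrib_right)
  also have "\<dots> = integral\<^sup>L M (\<lambda>x. (\<Sum>i=1..k. (1 / \<alpha> i) * (f x * Sstar (z - S (u i)) x))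
        - \<gamma> k * (f x * pd x) - f x * Sstar w x)"
    using integrable by (simp add: pd_def)
  also have "\<dots> = integral\<^sup>L M (\<lambda>x. f x * (lam k x - (Sstar w x + \<gamma> k * pd x)))"
    by (simp add: lam_eq sum_distrib_left algebra_simps)
  finally show ?thesis .
qed

lemma S_dist_bounded:
  obtains R where "\<And>i. 1 \<le> i \<Longrightarrow> norm (S ud - S (u i)) \<le> R"
proof -
  obtain B where B: "\<And>v. AE x in M. ua x \<le> v x \<and> v x \<le> ub x \<Longrightarrow> AE x in M. \<bar>v x\<bar> \<le> B"
    using box_bounded by blast
  obtain C where "0 \<le> C" and C: "\<And>f. f \<in> L2 M \<Longrightarrow> norm (S f) \<le> C * L2norm M f"
    using S_bound by blast
  define D where "D = sqrt ((2 * B)\<^sup>2 * measure M (space M))"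
  have "norm (S ud - S (u i)) \<le> C * D" if "1 \<le> i" for i
  proof -
    have u_L2: "u i \<in> L2 M" and u_box: "AE x in M. ua x \<le> u i x \<and> u i x \<le> ub x"
      using u_Uad[OF that] by (simp_all add: Uad_def)
    have ud_box: "AE x in M. ua x \<le> ud x \<and> ud x \<le> ub x"
      using ud_Uad by (simp add: Uad_def)
    have "AE x in M. \<bar>u i x - ud x\<bar> \<le> 2 * B"
      using B[OF u_box] B[OF ud_box] by eventually_elim linarith
    then have "L2norm M (\<lambda>x. u i x - ud x) \<le> D"
      unfolding D_def using L2_diff[OF u_L2 ud_L2]
      by (intro L2norm_le_bound[OF finite_M] L2_borel_measurable)
    then have "C * L2norm M (\<lambda>x. u i x - ud x) \<le> C * D"
      using \<open>0 \<le> C\<close> by (rule mult_left_mono)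
    moreover have "norm (S ud - S (u i)) = norm (S (\<lambda>x. u i x - ud x))"
      using S_diff[OF u_L2 ud_L2] by (simp add: norm_minus_commute)
    ultimately show ?thesis
      using C[OF L2_diff[OF u_L2 ud_L2]] by linarith
  qed
  then show thesis
    by (rule that)
qed

lemma norm_e_le:
  obtains R where "\<And>k. norm (e k) \<le> norm w + R * \<gamma> k"
proof -
  obtain R where R: "\<And>i. 1 \<le> i \<Longrightarrow> norm (S ud - S (u i)) \<le> R"
    using S_dist_bounded by blast
  have "norm (e k) \<le> norm w + R * \<gamma> k" for k
  proof -
    define s where "s = (\<Sum>i=1..k. (1 / \<alpha> i) *\<^sub>R (S ud - S (u i)))"
    have "norm s \<le> (\<Sum>i=1..k. (1 / \<alpha> i) * R)"
      unfolding s_def using \<alpha>_pos R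
      by (intro norm_sum[THEN order_trans] sum_mono) (simp add: abs_of_pos divide_right_mono less_imp_le)
    also have "\<dots> = R * \<gamma> k"
      by (simp add: \<gamma>_def sum_distrib_left mult.commute)
    finally have "norm s \<le> R * \<gamma> k" .
    moreover have "norm (e k) \<le> norm s + norm w"
      unfolding e_def s_def by (rule norm_triangle_ineq4)
    ultimately show ?thesis
      by linarith
  qed
  then show thesis
    by (rule that)
qed

lemma inner_e_lower_bound:
  obtains C K L where "0 \<le> C" "0 < K" "\<And>k. 1 \<le> k \<Longrightarrow>
    (L2norm M (\<lambda>x. u k x - ud x))\<^sup>2 / 2 - (\<delta> k)\<^sup>2 - L * (K / \<gamma> k) powr \<kappa> - C * norm (e k) * \<delta> k
      \<le> inner (e k) (S (u k) - S ud)"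
proof -
  obtain C where "0 \<le> C" and C: "\<And>f. f \<in> L2 M \<Longrightarrow> norm (S f) \<le> C * L2norm M f"
    using S_bound by blast
  obtain K L where "0 < K" and estimate: "\<And>l g. l \<in> L2 M \<Longrightarrow> 0 < g \<Longrightarrow>
      (L2norm M (\<lambda>x. projUad ua ub l x - ud x))\<^sup>2 - L * (K / g) powr \<kappa>
        \<le> integral\<^sup>L M (\<lambda>x. (projUad ua ub l x - ud x) * (l x - (Sstar w x + g * pd x)))"
    using active_set_estimate by blast
  have "(L2norm M (\<lambda>x. u k x - ud x))\<^sup>2 / 2 - (\<delta> k)\<^sup>2 - L * (K / \<gamma> k) powr \<kappa> - C * norm (e k) * \<delta> k
      \<le> inner (e k) (S (u k) - S ud)" if k1: "1 \<le> k" for k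
  proof -
    have "(L2norm M (\<lambda>x. proj_lam k x - ud x))\<^sup>2 - L * (K / \<gamma> k) powr \<kappa>
        \<le> inner (e k) (S (\<lambda>x. proj_lam k x - ud x))"
      using estimate[OF lam_L2[of k] \<gamma>_pos[OF k1]] inner_S_e[OF L2_diff[OF proj_lam_L2 ud_L2], of k]
      by (simp add: inner_commute proj_lam_def)
    moreover have "- (C * norm (e k) * \<delta> k) \<le> inner (e k) (S (\<lambda>x. u k x - proj_lam k x))"
    proof -
      have "\<bar>inner (e k) (S (\<lambda>x. u k x - proj_lam k x))\<bar> \<le> norm (e k) * (C * \<delta> k)"
        using Cauchy_Schwarz_ineq2 C[OF L2_diff[OF u_L2[OF k1] proj_lam_L2]] unfolding \<delta>_def
        by (rule order_trans[OF _ mult_left_mono]) simp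
      then show ?thesis
        by (simp add: mult_ac)
    qed
    ultimately show ?thesis
      using dist_square_le[OF k1] unfolding S_dist_split[OF k1] inner_add_right by linarith
  qed
  with \<open>0 \<le> C\<close> \<open>0 < K\<close> show thesis
    by (rule that)
qed

lemma remainder_tendsto_0:
  assumes "0 \<le> K"
  shows "(\<lambda>k. (\<delta> k)\<^sup>2 + L * (K / \<gamma> k) powr \<kappa> + C * norm w * \<delta> k + C * R * (\<gamma> k * \<delta> k)) \<longlonglongrightarrow> 0"
proof -
  have "(\<lambda>k. K / \<gamma> k) \<longlonglongrightarrow> 0"
    by (rule tendsto_divide_0[OF tendsto_const filterlim_at_top_imp_at_infinity[OF \<gamma>_at_top]])
  then have "(\<lambda>k. (K / \<gamma> k) powr \<kappa>) \<longlonglongrightarrow> 0"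
    by (rule tendsto_zero_powrI[OF _ tendsto_const _ \<kappa>_pos])
      (use assms \<gamma>_nonneg in \<open>auto intro!: always_eventually\<close>)
  moreover have "(\<lambda>k. (\<delta> k)\<^sup>2) \<longlonglongrightarrow> 0"
    using tendsto_power[OF \<delta>_tendsto_0, of 2] by simp
  ultimately show ?thesis
    using \<delta>_tendsto_0 \<gamma>_\<delta>_tendsto_0 by (intro tendsto_mult_right_zero tendsto_add_zero)
qed

lemma descent:
  obtains r where "r \<longlonglongrightarrow> 0" "\<And>k. (norm (e (Suc k)))\<^sup>2
    \<le> (norm (e k))\<^sup>2 - 1 / \<alpha> (Suc k) * ((L2norm M (\<lambda>x. u (Suc k) x - ud x))\<^sup>2 - r (Suc k))"
proof -
  obtain C K L where "0 \<le> C" "0 < K" and lower_bound: "\<And>k. 1 \<le> k \<Longrightarrow>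
      (L2norm M (\<lambda>x. u k x - ud x))\<^sup>2 / 2 - (\<delta> k)\<^sup>2 - L * (K / \<gamma> k) powr \<kappa> - C * norm (e k) * \<delta> k
        \<le> inner (e k) (S (u k) - S ud)"
    using inner_e_lower_bound by blast
  obtain R where R: "\<And>k. norm (e k) \<le> norm w + R * \<gamma> k"
    using norm_e_le by blast
  define r where "r k = 2 * ((\<delta> k)\<^sup>2 + L * (K / \<gamma> k) powr \<kappa> + C * norm w * \<delta> k + C * R * (\<gamma> k * \<delta> k))" for k
  have "r \<longlonglongrightarrow> 0"
    unfolding r_def using remainder_tendsto_0 \<open>0 < K\<close> by (intro tendsto_mult_right_zero) simp
  moreover have "(norm (e (Suc k)))\<^sup>2
      \<le> (norm (e k))\<^sup>2 - 1 / \<alpha> (Suc k) * ((L2norm M (\<lambda>x. u (Suc k) x - ud x))\<^sup>2 - r (Suc k))" for k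
  proof -
    define a where "a = 1 / \<alpha> (Suc k)"
    have "0 < a"
      using \<alpha>_pos by (simp add: a_def)
    have "e k = e (Suc k) + a *\<^sub>R (S (u (Suc k)) - S ud)"
      by (simp add: e_Suc a_def algebra_simps)
    then have expansion: "(norm (e (Suc k)))\<^sup>2 + 2 * a * inner (e (Suc k)) (S (u (Suc k)) - S ud) \<le> (norm (e k))\<^sup>2"
      by (simp add: norm_add_scaleR_square)
    have "C * norm (e (Suc k)) * \<delta> (Suc k) \<le> C * (norm w + R * \<gamma> (Suc k)) * \<delta> (Suc k)"
      using R \<open>0 \<le> C\<close> by (intro mult_right_mono mult_left_mono) (simp_all add: \<delta>_def L2norm_nonneg)
    then have gap: "(L2norm M (\<lambda>x. u (Suc k) x - ud x))\<^sup>2 - r (Suc k) \<le> 2 * inner (e (Suc k)) (S (u (Suc k)) - S ud)"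
      using lower_bound[of "Suc k"] by (simp add: r_def algebra_simps)
    have "a * ((L2norm M (\<lambda>x. u (Suc k) x - ud x))\<^sup>2 - r (Suc k))
        \<le> 2 * a * inner (e (Suc k)) (S (u (Suc k)) - S ud)"
      using mult_left_mono[OF gap, of a] \<open>0 < a\<close> by (simp add: mult_ac)
    then show ?thesis
      using expansion unfolding a_def by linarith
  qed
  ultimately show thesis
    by (rule that)
qed

theorem Min_dist_tendsto_0: "(\<lambda>k. Min ((\<lambda>i. L2norm M (\<lambda>x. u i x - ud x)) ` {1..k})) \<longlonglongrightarrow> 0"
proof (rule Min_prefix_tendsto_zero)
  fix \<rho> :: real
  assume "0 < \<rho>"
  obtain r where "r \<longlonglongrightarrow> 0" and descent: "\<And>k. (norm (e (Suc k)))\<^sup>2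
      \<le> (norm (e k))\<^sup>2 - 1 / \<alpha> (Suc k) * ((L2norm M (\<lambda>x. u (Suc k) x - ud x))\<^sup>2 - r (Suc k))"
    using descent by blast
  obtain A where "0 < A" "\<And>k. \<alpha> k \<le> A"
    using \<alpha>_le by blast
  then have a_ge: "1 / A \<le> 1 / \<alpha> k" for k
    using \<alpha>_pos by (simp add: frac_le)
  have "\<exists>i\<ge>1. (L2norm M (\<lambda>x. u i x - ud x))\<^sup>2 < \<rho>\<^sup>2"
    by (rule descent_imp_small_term[where E = "\<lambda>k. (norm (e k))\<^sup>2" and a = "\<lambda>k. 1 / \<alpha> k"
          and d = "\<lambda>k. (L2norm M (\<lambda>x. u k x - ud x))\<^sup>2", OF _ a_ge _ \<open>r \<longlonglongrightarrow> 0\<close> descent])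
      (use \<open>0 < A\<close> \<open>0 < \<rho>\<close> in auto)
  then show "\<exists>i\<ge>1. L2norm M (\<lambda>x. u i x - ud x) < \<rho>"
    using \<open>0 < \<rho>\<close> power_less_imp_less_base by (meson less_imp_le)
qed (rule L2norm_nonneg)

end

lemma active_set_condition_lebesgue_on:
  assumes "\<Omega> \<in> sets lebesgue" "active_set_condition \<Omega> ua ub S Sstar z ud"
  obtains I w \<kappa> c where "I \<in> sets (lebesgue_on \<Omega>)" "0 < \<kappa>"
    "{x \<in> space (lebesgue_on \<Omega>). Sstar (z - S ud) x = 0} \<subseteq> I"
    "AE x in lebesgue_on \<Omega>. x \<in> I \<longrightarrow> ud x = projUad ua ub (Sstar w) x"
    "\<And>t. 0 < t \<Longrightarrow> measure (lebesgue_on \<Omega>)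
      {x \<in> space (lebesgue_on \<Omega>) - I. 0 < \<bar>Sstar (z - S ud) x\<bar> \<and> \<bar>Sstar (z - S ud) x\<bar> < t}
        \<le> c * t powr \<kappa>"
    "Sstar w \<in> Linfty (lebesgue_on \<Omega>)"
proof -
  obtain I w \<kappa> c where I: "I \<in> sets lebesgue" "I \<subseteq> \<Omega>" and "0 < \<kappa>" "0 < c"
    and zero_set: "{x \<in> \<Omega>. Sstar (z - S ud) x = 0} \<subseteq> I"
    and on_I: "AE x in lebesgue_on \<Omega>. x \<in> I \<longrightarrow> ud x = projUad ua ub (Sstar w) x"
    and emeasure_bound: "\<And>t. 0 < t \<Longrightarrow> emeasure lebesgue
      {x \<in> \<Omega> - I. 0 < \<bar>Sstar (z - S ud) x\<bar> \<and> \<bar>Sstar (z - S ud) x\<bar> < t} \<le> ennreal (c * t powr \<kappa>)"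
    and "Sstar w \<in> Linfty (lebesgue_on \<Omega>)"
    using assms(2) unfolding active_set_condition_def Let_def by blast
  have measure_bound: "measure (lebesgue_on \<Omega>)
      {x \<in> \<Omega> - I. 0 < \<bar>Sstar (z - S ud) x\<bar> \<and> \<bar>Sstar (z - S ud) x\<bar> < t} \<le> c * t powr \<kappa>"
    if "0 < t" for t
  proof -
    have "measure lebesgue {x \<in> \<Omega> - I. 0 < \<bar>Sstar (z - S ud) x\<bar> \<and> \<bar>Sstar (z - S ud) x\<bar> < t}
        \<le> c * t powr \<kappa>"
      using emeasure_bound[OF that] \<open>0 < c\<close> unfolding measure_def by (intro enn2real_leI) auto
    then show ?thesis
      by (subst measure_restrict_space) (use assms(1) in auto)
  qed
  have "I \<in> sets (lebesgue_on \<Omega>)"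
    using I assms(1) by (subst sets_restrict_space_iff) auto
  show thesis
    by (rule that[OF \<open>I \<in> sets (lebesgue_on \<Omega>)\<close> \<open>0 < \<kappa>\<close> _ on_I _ \<open>Sstar w \<in> Linfty (lebesgue_on \<Omega>)\<close>])
      (use zero_set measure_bound in auto)
qed

theorem corollary4p6:
  fixes \<Omega> :: "'a::euclidean_space set"
    and S :: "('a \<Rightarrow> real) \<Rightarrow> 'y::{real_inner, complete_space}"
    and Sstar :: "'y \<Rightarrow> ('a \<Rightarrow> real)"
    and z :: 'y
    and ua ub ud :: "'a \<Rightarrow> real"
    and \<alpha> \<epsilon> :: "nat \<Rightarrow> real"
    and u lam :: "nat \<Rightarrow> 'a \<Rightarrow> real"
  defines "M \<equiv> lebesgue_on \<Omega>"
  defines "\<gamma> \<equiv> (\<lambda>k. \<Sum>j=1..k. 1 / \<alpha> j)"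
  assumes \<Omega>: "bounded \<Omega>" "\<Omega> \<in> sets lebesgue"
    and S: "bounded_linear_L2 M S"
    and Sstar: "is_adjoint M S Sstar"
    and uab: "ua \<in> Linfty M" "ub \<in> Linfty M" "AE x in M. ua x \<le> ub x"
    and ud_sol: "ud \<in> Uad M ua ub" "\<forall>v\<in>Uad M ua ub. norm (S ud - z) \<le> norm (S v - z)"
    and asc: "active_set_condition \<Omega> ua ub S Sstar z ud"
    and alpha_pos: "\<forall>k. \<alpha> k > 0" and alpha_bdd: "bounded (range \<alpha>)"
    and eps_pos: "\<forall>k. \<epsilon> k > 0"
    and eps_lim: "(\<lambda>i. \<gamma> (i - 1) * \<epsilon> i) \<longlonglongrightarrow> 0"
    and init: "u 0 = projUad ua ub (\<lambda>x. 0)" "lam 0 = (\<lambda>x. 0)"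
    and step: "\<forall>k\<ge>1. u k \<in> Uad M ua ub \<and>
                  Bres M ua ub S Sstar z (\<alpha> k) (lam (k - 1)) (u k) \<le> \<epsilon> k \<and>
                  lam k = (\<lambda>x. \<Sum>i=1..k. (1 / \<alpha> i) * Sstar (z - S (u i)) x)"
  shows "(\<lambda>k. Min ((\<lambda>i. L2norm M (\<lambda>x. u i x - ud x)) ` {1..k})) \<longlonglongrightarrow> 0"
proof -
  have "finite_measure M"
    unfolding M_def using \<Omega> by (intro finite_measure_lebesgue_on bounded_set_imp_lmeasurable)
  obtain I w \<kappa> c where "I \<in> sets M" "0 < \<kappa>" "{x \<in> space M. Sstar (z - S ud) x = 0} \<subseteq> I"
    "AE x in M. x \<in> I \<longrightarrow> ud x = projUad ua ub (Sstar w) x"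
    "\<And>t. 0 < t \<Longrightarrow> measure M {x \<in> space M - I. 0 < \<bar>Sstar (z - S ud) x\<bar> \<and> \<bar>Sstar (z - S ud) x\<bar> < t}
      \<le> c * t powr \<kappa>"
    "Sstar w \<in> Linfty M"
    by (rule active_set_condition_lebesgue_on[OF \<Omega>(2) asc, folded M_def]) (rule that)
  note active_set = this
  interpret inexact_bregman M S Sstar ua ub ud z I w \<kappa> c \<alpha> \<epsilon> u lam
    by (intro inexact_bregman.intro active_set.intro box_least_squares.intro L2_operator.intro
        inexact_bregman_axioms.intro active_set_axioms.intro box_least_squares_axioms.intro)
      (use active_set \<open>finite_measure M\<close> S Sstar uab ud_sol alpha_pos alpha_bdd eps_pos eps_lim init(2) step
        in \<open>simp_all add: \<gamma>_def\<close>)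
  show ?thesis
    by (rule Min_dist_tendsto_0)
qed

end
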